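(* For all integers $1\le m\le n$, \[ S(n,m) = 1 + \sum_{x=m}^{\lfloor n/2\rfloor}\bigl(S(n-x,x)+1\bigr), \] where the sum is empty (and $S(n,m)=1$) when $m>\lfloor n/2\rfloor$.
   Context: An ascending composition of a positive integer $n$ is a finite sequence of positive integers $(a_1,\dots,a_k)$, $k\ge1$, with $a_1+\dots+a_k=n$ and $a_1\le\dots\le a_k$. For $1\le m\le n$, $\mathcal{A}(n,m)$ is the set of ascending compositions of $n$ with $a_1\ge m$. List the elements of $\mathcal{A}(n,m)$ in increasing lexicographic order as $b^{(1)},\dots,b^{(N)}$. The suffix length $S(n,m)$ is defined as the number of parts of $b^{(1)}$ plus, for each $i=1,\dots,N-1$, the number of parts of $b^{(i+1)}$ lying beyond the longest common prefix of $b^{(i)}$ and $b^{(i+1)}$. *)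

theory Defs
  imports Main "HOL-Library.List_Lexorder"
begin

definition asc_comps :: "nat \<Rightarrow> nat \<Rightarrow> nat list set" where
  "asc_comps n m = {xs. xs \<noteq> [] \<and> sorted xs \<and> (\<forall>x\<in>set xs. x \<ge> 1)
                        \<and> sum_list xs = n \<and> hd xs \<ge> m}"

fun lcp :: "'a list \<Rightarrow> 'a list \<Rightarrow> 'a list" where
  "lcp (x # xs) (y # ys) = (if x = y then x # lcp xs ys else [])"
| "lcp _ _ = []"

text \<open>Elements of A(n,m) listed in increasing lexicographic order
  (the linorder on lists from List_Lexorder is the lexicographic order).\<close>
definition asc_list :: "nat \<Rightarrow> nat \<Rightarrow> nat list list" where
  "asc_list n m = sorted_list_of_set (asc_comps n m)"

definition suffix_len :: "nat \<Rightarrow> nat \<Rightarrow> nat" where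
  "suffix_len n m = (let bs = asc_list n m in
     length (hd bs) +
     (\<Sum>i<length bs - 1. length (bs ! (i+1)) - length (lcp (bs ! i) (bs ! (i+1)))))"

end

theory Submission
  imports Defs
begin

(* Every ascending composition of n with first part at least m is either
   the one-part composition [n], or it has the form x # r with m <= x <= n div 2 and
   r an ascending composition of n - x with first part at least x.  In lexicographic
   order the list of A(n,m) is therefore a concatenation of blocks: for x = m, ...,
   n div 2 the list of A(n-x,x) with x prepended to every element, followed by [n].
   The suffix length is additive over such blocks, because consecutive elements of
   different blocks have different first parts and so share no prefix; prepending x
   to a whole block adds exactly one new part (the first element's).  Hence the
   block for x contributes S(n-x,x) + 1 and the final block [n] contributes 1. *)

fun new_parts :: "'a list list \<Rightarrow> nat" where
  "new_parts (a # b # bs) = (length b - length (lcp a b)) + new_parts (b # bs)"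
| "new_parts _ = 0"

definition suffix_total :: "'a list list \<Rightarrow> nat" where
  "suffix_total bs = length (hd bs) + new_parts bs"

lemma sum_new_parts:
  "(\<Sum>i<length bs - 1. length (bs ! (i+1)) - length (lcp (bs ! i) (bs ! (i+1)))) = new_parts bs"
proof (induction bs rule: new_parts.induct)
  case (1 a b bs)
  have "length (a # b # bs) - 1 = Suc (length (b # bs) - 1)" by simp
  then show ?case using 1 by (simp only: sum.lessThan_Suc_shift) simp
qed auto

lemma suffix_len_eq_suffix_total: "suffix_len n m = suffix_total (asc_list n m)"
  unfolding suffix_len_def suffix_total_def Let_def sum_new_parts ..

lemma lcp_hd_differ: "hd a \<noteq> hd b \<Longrightarrow> lcp a b = []"
  by (cases a; cases b) auto

lemma new_parts_append:
  assumes "xs \<noteq> []" "ys \<noteq> []" "lcp (last xs) (hd ys) = []"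
  shows "new_parts (xs @ ys) = new_parts xs + length (hd ys) + new_parts ys"
  using assms
proof (induction xs rule: new_parts.induct)
  case (1 a b bs)
  then show ?case by simp
next
  case ("2_2" a)
  then show ?case by (cases ys) auto
qed simp_all

lemma suffix_total_append:
  assumes "xs \<noteq> []" "ys \<noteq> []" "lcp (last xs) (hd ys) = []"
  shows "suffix_total (xs @ ys) = suffix_total xs + suffix_total ys"
  using new_parts_append[OF assms] assms(1) unfolding suffix_total_def by (cases xs) auto

lemma new_parts_map_Cons: "new_parts (map (Cons x) bs) = new_parts bs"
  by (induction bs rule: new_parts.induct) auto

lemma suffix_total_map_Cons: "bs \<noteq> [] \<Longrightarrow> suffix_total (map (Cons x) bs) = suffix_total bs + 1"
  unfolding suffix_total_def new_parts_map_Cons by (cases bs) auto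

lemma suffix_total_concat:
  assumes "bss \<noteq> []" "\<forall>B\<in>set bss. B \<noteq> []"
    and "sorted_wrt (\<lambda>B C. \<forall>b\<in>set B. \<forall>c\<in>set C. hd b \<noteq> hd c) bss"
  shows "suffix_total (concat bss) = sum_list (map suffix_total bss)"
  using assms
proof (induction bss)
  case (Cons B bss)
  show ?case
  proof (cases "bss = []")
    case False
    then obtain C where C: "hd bss = C" "C \<in> set bss" "C \<noteq> []"
      using Cons.prems(2) by (cases bss) auto
    have heads: "hd (hd (concat bss)) = hd (hd C)"
      using C \<open>bss \<noteq> []\<close> by (cases bss) auto
    have "hd (last B) \<noteq> hd (hd C)"
      using Cons.prems C by (simp add: last_in_set hd_in_set)
    then have "lcp (last B) (hd (concat bss)) = []"
      by (intro lcp_hd_differ) (simp add: heads)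
    moreover have "concat bss \<noteq> []" using C by (cases bss) auto
    ultimately have "suffix_total (B @ concat bss) = suffix_total B + suffix_total (concat bss)"
      using Cons.prems(2) by (intro suffix_total_append) auto
    then show ?thesis using Cons False by simp
  qed simp
qed simp

text \<open>A composition in A(n,m) is either [n], or a first part x with m <= x <= n div 2
  followed by a composition in A(n-x,x); the bound n div 2 holds since x is at most
  the (not smaller) remaining parts.\<close>
lemma asc_comps_decomp:
  assumes "1 \<le> m" "m \<le> n"
  shows "asc_comps n m = {[n]} \<union> (\<Union>x\<in>{m..n div 2}. Cons x ` asc_comps (n - x) x)"
proof
  show "asc_comps n m \<subseteq> {[n]} \<union> (\<Union>x\<in>{m..n div 2}. Cons x ` asc_comps (n - x) x)"
  proof
    fix xs assume xs: "xs \<in> asc_comps n m"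
    then obtain a r where ar: "xs = a # r" unfolding asc_comps_def by (cases xs) auto
    show "xs \<in> {[n]} \<union> (\<Union>x\<in>{m..n div 2}. Cons x ` asc_comps (n - x) x)"
    proof (cases "r = []")
      case True
      then show ?thesis using xs ar unfolding asc_comps_def by auto
    next
      case False
      have s: "sorted (a # r)" "a \<ge> m" "a + sum_list r = n" "\<forall>x\<in>set r. x \<ge> 1"
        using xs ar unfolding asc_comps_def by auto
      have "hd r \<in> set r" using False by simp
      then have "a \<le> hd r" "hd r \<le> sum_list r"
        using s(1) member_le_sum_list by auto
      then have "a \<le> n div 2" using s(3) by linarith
      moreover have "r \<in> asc_comps (n - a) a"
        using False s \<open>a \<le> hd r\<close> unfolding asc_comps_def by auto
      ultimately show ?thesis using ar s(2) by auto
    qed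
  qed
next
  show "{[n]} \<union> (\<Union>x\<in>{m..n div 2}. Cons x ` asc_comps (n - x) x) \<subseteq> asc_comps n m"
  proof
    fix xs assume "xs \<in> {[n]} \<union> (\<Union>x\<in>{m..n div 2}. Cons x ` asc_comps (n - x) x)"
    then consider "xs = [n]"
      | x r where "x \<in> {m..n div 2}" "r \<in> asc_comps (n - x) x" "xs = x # r"
      by blast
    then show "xs \<in> asc_comps n m"
    proof cases
      case 1
      then show ?thesis using assms unfolding asc_comps_def by auto
    next
      case 2
      have r: "r \<noteq> []" "sorted r" "hd r \<ge> x"
        using 2(2) unfolding asc_comps_def by auto
      have "\<forall>y\<in>set r. x \<le> y"
        using r by (cases r) auto
      then show ?thesis using 2 assms unfolding asc_comps_def by auto
    qed
  qed
qed

text \<open>A(n,m) is finite: its elements are lists of at most n parts, each at most n.\<close>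
lemma finite_asc_comps: "finite (asc_comps n m)"
proof -
  have "length xs \<le> sum_list xs" if "\<forall>x\<in>set xs. x \<ge> (1::nat)" for xs
    using that by (induction xs) auto
  then have "asc_comps n m \<subseteq> {xs. set xs \<subseteq> {..n} \<and> length xs \<le> n}"
    unfolding asc_comps_def using member_le_sum_list by fastforce
  then show ?thesis
    using finite_lists_length_le[of "{..n}" n] finite_subset by blast
qed

lemma set_asc_list: "set (asc_list n m) = asc_comps n m"
  unfolding asc_list_def using finite_asc_comps by simp

lemma sorted_list_of_set_strict_sorted:
  fixes xs :: "'a::linorder list"
  assumes "sorted_wrt (<) xs"
  shows "sorted_list_of_set (set xs) = xs"
  using assms by (simp add: sorted_list_of_set_sort_remdups strict_sorted_iff
      distinct_remdups_id sorted_sort_id)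

lemma sorted_wrt_concat_Cons_blocks:
  fixes xs :: "'a::linorder list" and L :: "'a \<Rightarrow> 'a list list"
  assumes "sorted_wrt (<) xs" "\<forall>x\<in>set xs. sorted_wrt (<) (L x)"
  shows "sorted_wrt (<) (concat (map (\<lambda>x. map (Cons x) (L x)) xs))"
  using assms by (induction xs) (auto simp: sorted_wrt_append sorted_wrt_map)

lemma asc_list_decomp:
  assumes "1 \<le> m" "m \<le> n"
  shows "asc_list n m =
    concat (map (\<lambda>x. map (Cons x) (asc_list (n - x) x)) [m..<Suc (n div 2)]) @ [[n]]"
    (is "_ = ?blocks @ [[n]]")
proof -
  have "set (?blocks @ [[n]]) = {[n]} \<union> (\<Union>x\<in>{m..n div 2}. Cons x ` asc_comps (n - x) x)"
    by (simp del: upt_Suc add: set_asc_list atLeastLessThanSuc_atLeastAtMost)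
  then have set_eq: "set (?blocks @ [[n]]) = asc_comps n m"
    using asc_comps_decomp[OF assms] by simp
  have "sorted_wrt (<) (asc_list k x)" for k x
    unfolding asc_list_def by simp
  then have "sorted_wrt (<) ?blocks"
    by (intro sorted_wrt_concat_Cons_blocks) (simp_all del: upt_Suc)
  moreover have "b < [n]" if "b \<in> set ?blocks" for b
    using that assms by auto
  ultimately have "sorted_wrt (<) (?blocks @ [[n]])"
    by (simp add: sorted_wrt_append)
  then show ?thesis
    unfolding asc_list_def set_eq[symmetric] by (rule sorted_list_of_set_strict_sorted)
qed

lemma asc_list_nonempty: "1 \<le> m \<Longrightarrow> m \<le> n \<Longrightarrow> asc_list n m \<noteq> []"
  by (simp add: asc_list_decomp)

theorem mainTheorem3:
  fixes n m :: nat
  assumes "1 \<le> m" and "m \<le> n"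
  shows "suffix_len n m = 1 + (\<Sum>x = m..n div 2. suffix_len (n - x) x + 1)"
proof -
  let ?block = "\<lambda>x. map (Cons x) (asc_list (n - x) x)"
  let ?firsts = "[m..<Suc (n div 2)]"
  have nonempty: "asc_list (n - x) x \<noteq> []" if "x \<in> set ?firsts" for x
    using that assms by (intro asc_list_nonempty) auto
  have "suffix_len n m = suffix_total (concat (map ?block ?firsts @ [[[n]]]))"
    using asc_list_decomp[OF assms] by (simp add: suffix_len_eq_suffix_total)
  also have "\<dots> = sum_list (map suffix_total (map ?block ?firsts @ [[[n]]]))"
    using nonempty assms
    by (intro suffix_total_concat)
      (auto simp del: upt_Suc simp: sorted_wrt_append sorted_wrt_map
            intro: sorted_wrt_mono_rel[OF _ sorted_wrt_upt])
  also have "\<dots> = sum_list (map suffix_total (map ?block ?firsts)) + 1"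
    by (simp del: upt_Suc add: suffix_total_def)
  also have "map suffix_total (map ?block ?firsts) = map (\<lambda>x. suffix_len (n - x) x + 1) ?firsts"
    using nonempty by (simp add: suffix_total_map_Cons suffix_len_eq_suffix_total)
  also have "sum_list \<dots> + 1 = 1 + (\<Sum>x = m..n div 2. suffix_len (n - x) x + 1)"
    by (simp del: upt_Suc add: sum_list_distinct_conv_sum_set atLeastLessThanSuc_atLeastAtMost)
  finally show ?thesis .
qed

end
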